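(* Consider $\dot y=Ay+B(u+\Delta(y,t))$, $y\in\mathbb{R}^{\bar n}$, $u\in\mathbb{R}^{\bar m}$, with constant $A\in\mathbb{R}^{\bar n\times\bar n}$, full-rank $B\in\mathbb{R}^{\bar n\times\bar m}$, and unknown $\Delta$ bounded by a known constant. Let $K\in\mathbb{R}^{\bar m\times\bar n}$ be such that $A^{cl}:=A+BK$ is Hurwitz. If $S\in\mathbb{R}^{\bar m\times\bar n}$ satisfies (1) $\det(SB)\neq0$ and (2) $Sy=0\Rightarrow SA^{cl}y=0$, then, when restricted to the manifold $\Sigma=\{y\in\mathbb{R}^{\bar n}: Sy=0\}$, the system experiences the equivalent control $u_{eq}=Ky-\Delta(y,t)$.
   Context: Equivalent control: the control $u_{eq}$ determined by requiring $S\dot y\equiv0$ along motions confined to $\Sigma$; motion in sliding mode evolves as the system with $u=u_{eq}$. *)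

theory Defs
  imports "HOL-Analysis.Analysis"
begin

definition hurwitz :: "real^'n^'n \<Rightarrow> bool" where
  "hurwitz A \<longleftrightarrow>
     (\<forall>(lam::complex) (v::complex^'n). v \<noteq> 0 \<and>
        (\<chi> i j. complex_of_real (A $ i $ j)) *v v = lam *s v \<longrightarrow> Re lam < 0)"

definition full_rank :: "real^'m^'n \<Rightarrow> bool" where
  "full_rank B \<longleftrightarrow> rank B = min CARD('n) CARD('m)"

text \<open>u is an equivalent control at (y,t): it makes the derivative of S y vanish, i.e.
  S (A y + B (u + Delta y t)) = 0.\<close>
definition is_equiv_control ::
  "real^'n^'n \<Rightarrow> real^'m^'n \<Rightarrow> real^'n^'m \<Rightarrow> (real^'n \<Rightarrow> real \<Rightarrow> real^'m)
     \<Rightarrow> real^'n \<Rightarrow> real \<Rightarrow> real^'m \<Rightarrow> bool" where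
  "is_equiv_control A B S Delta y t u \<longleftrightarrow> S *v (A *v y + B *v (u + Delta y t)) = 0"

end

theory Submission
  imports Defs
begin

text \<open>On \<open>\<Sigma>\<close> the closed-loop invariance condition gives \<open>S A\<^sup>c\<^sup>l y = 0\<close>, so
  \<open>S (A y + B (u + \<Delta>)) = S A\<^sup>c\<^sup>l y + S B (u + \<Delta> - K y) = S B (u + \<Delta> - K y)\<close>.
  Since \<open>S B\<close> is invertible, this vanishes exactly for \<open>u = K y - \<Delta>\<close>.
  Full rank of \<open>B\<close>, boundedness of \<open>\<Delta>\<close> and the Hurwitz property are needed for
  reaching and stability of the sliding motion, not for the equivalent control itself.\<close>

lemma matrix_vector_mult_eq_0_iff_det_nz:
  fixes M :: "'a::field^'n^'n"
  assumes "det M \<noteq> 0"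
  shows "M *v x = 0 \<longleftrightarrow> x = 0"
  using assms matrix_left_invertible_ker[of M]
  by (auto simp: invertible_det_nz[symmetric] invertible_left_inverse)

lemma matrix_vector_mult_feedback_split:
  fixes A :: "'a::comm_ring_1^'n^'n" and B :: "'a^'m^'n" and K :: "'a^'n^'m" and S :: "'a^'n^'m"
  shows "S *v (A *v y + B *v v) = S *v ((A + B ** K) *v y) + (S ** B) *v (v - K *v y)"
  by (simp add: matrix_vector_mult_add_rdistrib matrix_vector_right_distrib
      matrix_vector_mult_diff_distrib matrix_vector_mul_assoc matrix_mul_assoc)

lemma is_equiv_control_iff:
  fixes A :: "real^'n^'n" and B :: "real^'m^'n" and K :: "real^'n^'m" and S :: "real^'n^'m"
  assumes "det (S ** B) \<noteq> 0" and "S *v ((A + B ** K) *v y) = 0"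
  shows "is_equiv_control A B S Delta y t u \<longleftrightarrow> u = K *v y - Delta y t"
proof -
  have "is_equiv_control A B S Delta y t u \<longleftrightarrow> (S ** B) *v (u + Delta y t - K *v y) = 0"
    unfolding is_equiv_control_def matrix_vector_mult_feedback_split[where K = K] assms(2) by simp
  also have "\<dots> \<longleftrightarrow> u = K *v y - Delta y t"
    unfolding matrix_vector_mult_eq_0_iff_det_nz[OF assms(1)] by (simp add: eq_diff_eq)
  finally show ?thesis .
qed

theorem lemma1:
  fixes A :: "real^'n^'n" and B :: "real^'m^'n" and K :: "real^'n^'m" and S :: "real^'n^'m"
    and Delta :: "real^'n \<Rightarrow> real \<Rightarrow> real^'m"
  assumes "full_rank B"
    and "\<exists>M. \<forall>y t. norm (Delta y t) \<le> M"
    and "hurwitz (A + B ** K)"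
    and "det (S ** B) \<noteq> 0"
    and "\<forall>y. S *v y = 0 \<longrightarrow> S *v ((A + B ** K) *v y) = 0"
  shows "\<forall>y t. S *v y = 0 \<longrightarrow>
           (\<forall>u. is_equiv_control A B S Delta y t u \<longleftrightarrow> u = K *v y - Delta y t)"
  using is_equiv_control_iff[OF assms(4)] assms(5) by blast

end
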